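(* Let $V$ be a vector space over $\mathrm{GF}(2)$ of finite dimension at least $3$. Then there exists a trilinear form $g:V^3\to\mathrm{GF}(2)$ such that for every $0\ne x\in V$ the induced bilinear form $g(x,-,-):V^2\to\mathrm{GF}(2)$ is not symmetric. *)

theory Defs
  imports Complex_Main "HOL-Library.Z2"
begin

definition trilinear_form ::
  "(bit \<Rightarrow> 'v::ab_group_add \<Rightarrow> 'v) \<Rightarrow> ('v \<Rightarrow> 'v \<Rightarrow> 'v \<Rightarrow> bit) \<Rightarrow> bool" where
  "trilinear_form scale g \<longleftrightarrow>
     (\<forall>y z. Vector_Spaces.linear scale (*) (\<lambda>x. g x y z)) \<and>
     (\<forall>x z. Vector_Spaces.linear scale (*) (\<lambda>y. g x y z)) \<and>
     (\<forall>x y. Vector_Spaces.linear scale (*) (\<lambda>z. g x y z))"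

end

theory Submission
  imports Defs
begin

(* Choose an ordered basis e_0, ..., e_(n-1) with coordinate functionals c_i and put
     g(x,y,z) = sum_(i<n) c_i(x) * c_i(y) * c_((i+1) mod n)(z),
   the "cyclic form".  It is trilinear because every summand is a product of linear
   coordinate functionals.  On basis vectors, g(x, e_j, e_l) = c_j(x) if l = j+1 (mod n)
   and 0 otherwise.  If x <> 0, some coordinate c_k(x) is nonzero; then
   g(x, e_k, e_(k+1)) = c_k(x) <> 0, while g(x, e_(k+1), e_k) = 0 because
   k <> k+2 (mod n) when n >= 3. *)

definition cyclic_form ::
  "(nat \<Rightarrow> 'v \<Rightarrow> 'a::comm_semiring_1) \<Rightarrow> nat \<Rightarrow> 'v \<Rightarrow> 'v \<Rightarrow> 'v \<Rightarrow> 'a" where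
  "cyclic_form c n x y z = (\<Sum>i<n. c i x * c i y * c (Suc i mod n) z)"

lemma cyclic_form_linear:
  fixes scale :: "'a::field \<Rightarrow> 'v::ab_group_add \<Rightarrow> 'v"
  assumes lin: "\<And>i. Vector_Spaces.linear scale (*) (c i)"
  shows "Vector_Spaces.linear scale (*) (\<lambda>x. cyclic_form c n x y z)"
    and "Vector_Spaces.linear scale (*) (\<lambda>y. cyclic_form c n x y z)"
    and "Vector_Spaces.linear scale (*) (\<lambda>z. cyclic_form c n x y z)"
proof -
  interpret vector_space_pair scale "(*) :: 'a \<Rightarrow> 'a \<Rightarrow> 'a"
    using lin[of 0] unfolding vector_space_pair_def Vector_Spaces.linear_iff by blast
  show "Vector_Spaces.linear scale (*) (\<lambda>x. cyclic_form c n x y z)"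
    unfolding cyclic_form_def mult.assoc
    by (intro linear_compose_sum ballI linear_compose_scale lin)
  show "Vector_Spaces.linear scale (*) (\<lambda>y. cyclic_form c n x y z)"
    unfolding cyclic_form_def mult.assoc
    by (intro linear_compose_sum ballI linear_compose_scale_right linear_compose_scale lin)
  show "Vector_Spaces.linear scale (*) (\<lambda>z. cyclic_form c n x y z)"
    unfolding cyclic_form_def
    by (intro linear_compose_sum ballI linear_compose_scale_right lin)
qed

text \<open>Evaluation of the cyclic form on a pair of vectors of a dual basis: only the
  summand \<open>i = j\<close> survives, and it is nonzero only when \<open>l\<close> follows \<open>j\<close> cyclically.\<close>

lemma cyclic_form_dual_basis:
  fixes c :: "nat \<Rightarrow> 'v \<Rightarrow> 'a::comm_semiring_1"
  assumes dual: "\<And>i j. i < n \<Longrightarrow> j < n \<Longrightarrow> c i (e j) = (if i = j then 1 else 0)"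
    and "j < n" "l < n"
  shows "cyclic_form c n x (e j) (e l) = (if l = Suc j mod n then c j x else 0)"
proof -
  have "cyclic_form c n x (e j) (e l) = (\<Sum>i<n. if i = j then (if l = Suc j mod n then c j x else 0) else 0)"
    unfolding cyclic_form_def using assms by (intro sum.cong) (auto simp: dual)
  also have "\<dots> = (if l = Suc j mod n then c j x else 0)"
    using \<open>j < n\<close> by simp
  finally show ?thesis .
qed

text \<open>For \<open>n \<ge> 3\<close> the slice at \<open>x\<close> is not symmetric as soon as some coordinate of
  \<open>x\<close> is nonzero: swapping \<open>e k\<close> and its cyclic successor kills the value,
  since the successor of the successor of \<open>k\<close> is not \<open>k\<close> again.\<close>

lemma cyclic_form_not_symmetric:
  fixes c :: "nat \<Rightarrow> 'v \<Rightarrow> 'a::comm_semiring_1"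
  assumes dual: "\<And>i j. i < n \<Longrightarrow> j < n \<Longrightarrow> c i (e j) = (if i = j then 1 else 0)"
    and "3 \<le> n" "k < n" "c k x \<noteq> 0"
  shows "cyclic_form c n x (e k) (e (Suc k mod n)) \<noteq> cyclic_form c n x (e (Suc k mod n)) (e k)"
proof -
  have succ: "Suc k mod n < n" using assms(3) by simp
  have no_return: "k \<noteq> Suc (Suc k mod n) mod n"
    using assms(2,3) by (auto simp: mod_Suc)
  have "cyclic_form c n x (e k) (e (Suc k mod n)) = c k x"
    using cyclic_form_dual_basis[of n c e, OF dual assms(3) succ] by simp
  moreover have "cyclic_form c n x (e (Suc k mod n)) (e k) = 0"
    using cyclic_form_dual_basis[of n c e, OF dual succ assms(3)] no_return by simp
  ultimately show ?thesis using assms(4) by simp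
qed

context finite_dimensional_vector_space begin

lemma coordinates_wrt_ordered_basis:
  obtains c :: "nat \<Rightarrow> 'b \<Rightarrow> 'a" and e :: "nat \<Rightarrow> 'b"
  where "\<And>i. Vector_Spaces.linear scale (*) (c i)"
    and "\<And>i j. i < dim UNIV \<Longrightarrow> j < dim UNIV \<Longrightarrow> c i (e j) = (if i = j then 1 else 0)"
    and "\<And>x. x \<noteq> 0 \<Longrightarrow> \<exists>k < dim UNIV. c k x \<noteq> 0"
proof -
  obtain xs where xs: "distinct xs" "set xs = Basis"
    using finite_distinct_list[OF finite_Basis] by blast
  have len: "length xs = dim UNIV"
    using xs by (simp add: distinct_card[symmetric])
  define c where "c i v = representation Basis v (xs ! i)" for i v
  have "Vector_Spaces.linear scale (*) (c i)" for i
    unfolding c_def by (rule linear_representation[OF independent_Basis span_Basis])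
  moreover have "c i (xs ! j) = (if i = j then 1 else 0)" if "i < dim UNIV" "j < dim UNIV" for i j
  proof -
    have "xs ! j \<in> Basis" using that xs len by auto
    then show ?thesis
      using that xs len unfolding c_def
      by (simp add: representation_basis[OF independent_Basis] nth_eq_iff_index_eq)
  qed
  moreover have "\<exists>k < dim UNIV. c k x \<noteq> 0" if "x \<noteq> 0" for x
  proof -
    have "\<exists>b. representation Basis x b \<noteq> 0"
    proof (rule ccontr)
      assume "\<nexists>b. representation Basis x b \<noteq> 0"
      then have "x = 0"
        using sum_nonzero_representation_eq[OF independent_Basis, of x] span_Basis by simp
      with that show False ..
    qed
    then obtain b where b: "representation Basis x b \<noteq> 0" ..
    then have "b \<in> set xs" using xs representation_ne_zero by blast
    then obtain k where "k < dim UNIV" "xs ! k = b" using len by (auto simp: in_set_conv_nth)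
    then show ?thesis using b unfolding c_def by blast
  qed
  ultimately show ?thesis by (intro that)
qed

end

theorem lemma4p4:
  fixes scale :: "bit \<Rightarrow> 'v::ab_group_add \<Rightarrow> 'v" and Basis :: "'v set"
  assumes "finite_dimensional_vector_space scale Basis"
    and "vector_space.dim scale (UNIV :: 'v set) \<ge> 3"
  shows "\<exists>g. trilinear_form scale g \<and>
           (\<forall>x. x \<noteq> 0 \<longrightarrow> \<not> (\<forall>y z. g x y z = g x z y))"
proof -
  interpret V: finite_dimensional_vector_space scale Basis by fact
  let ?n = "V.dim UNIV"
  obtain c e where lin: "\<And>i. Vector_Spaces.linear scale (*) (c i)"
    and dual: "\<And>i j. i < ?n \<Longrightarrow> j < ?n \<Longrightarrow> c i (e j) = (if i = j then 1 else 0)"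
    and nonzero: "\<And>x. x \<noteq> 0 \<Longrightarrow> \<exists>k < ?n. c k x \<noteq> 0"
    by (rule V.coordinates_wrt_ordered_basis) auto
  have "trilinear_form scale (cyclic_form c ?n)"
    unfolding trilinear_form_def using cyclic_form_linear[of scale c, OF lin] by blast
  moreover have "\<not> (\<forall>y z. cyclic_form c ?n x y z = cyclic_form c ?n x z y)"
    if x_nonzero: "x \<noteq> 0" for x
  proof -
    obtain k where "k < ?n" "c k x \<noteq> 0" using nonzero[OF x_nonzero] by blast
    then show ?thesis using cyclic_form_not_symmetric[of ?n c e, OF dual assms(2)] by blast
  qed
  ultimately show ?thesis by blast
qed

end
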